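(* Let $\Gamma<\mathrm{PSL}_2(\mathbb{C})$ be discrete, co-compact and torsion-free, $f:\mathbb{R}/2\pi\mathbb{Z}\to\mathbb{R}$ smooth with $\hat f(0)=0$, $T>0$ and $0<\eta\le\eta_0$. Then (1) the distribution $\mu_{T,f,\eta}$ has mean $b_{f,\eta}$; (2) $\mu_{T,f,\eta}$ is compactly supported on the interval \[\Big[b_{f,\eta}-2\sum_{|s|,|p|<T}m_\Gamma(\pi_{is,p})|\hat f(-p)||c_{s,\eta}|,\ b_{f,\eta}+2\sum_{|s|,|p|<T}m_\Gamma(\pi_{is,p})|\hat f(-p)||c_{s,\eta}|\Big]\] \[\subset\Big[b_{f,\eta}-2\sum_{s,p}m_\Gamma(\pi_{is,p})|\hat f(-p)||c_{s,\eta}|,\ b_{f,\eta}+2\sum_{s,p}m_\Gamma(\pi_{is,p})|\hat f(-p)||c_{s,\eta}|\Big],\] the sums running over principal series representations $\pi_{is,p}$ occurring in $L^2(\Gamma\backslash G)$.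
   Context: $G=\mathrm{PSL}_2(\mathbb{C})$. $\pi_{is,p}$ ($s\in\mathbb{R},p\in\mathbb{Z}$) is the unitary principal series representation induced from $\begin{pmatrix}e^{(u+i\theta)/2}&*\\0&e^{-(u+i\theta)/2}\end{pmatrix}\mapsto e^{ius+ip\theta}$; $m_\Gamma(\pi)$ is the multiplicity in $L^2(\Gamma\backslash G)$. $\hat f(p)=\frac1{2\pi}\int_0^{2\pi}f(\theta)e^{-ip\theta}d\theta$. Fix smooth even nonnegative $\psi$ supported in $[-1,1]$, $\int\psi=1$; $\psi_\eta(t)=\eta^{-1}\psi(t/\eta)$; $c_{s,\eta}=\int\psi_\eta(t)\frac{e^{t(1+is)}}{1+is}dt$; $b_{f,\eta}=\big(\sum_{p\ne0}m_\Gamma(\pi_{0,p})\mathrm{Re}\,\hat f(p)-2\mathrm{Re}\,\hat f(1)\big)2c_{0,\eta}$. Let $(s_1,p_1),\dots,(s_n,p_n)$ be the distinct pairs with $s_j\ne0$, $|s_j|,|p_j|<T$, $m_\Gamma(\pi_{is_j,p_j})\neq0$; $w_T(x)=2\sum_{j=1}^nm_\Gamma(\pi_{is_j,p_j})\mathrm{Re}\big(\hat f(-p_j)e^{2\pi ix_j}c_{s_j,\eta}\big)+b_{f,\eta}$ on $\mathbb{T}^n=\mathbb{R}^n/\mathbb{Z}^n$; $A$ is the closure of $\{(s_jy/2\pi)_j:y\in\mathbb{R}\}$ in $\mathbb{T}^n$ with Haar probability measure; $\mu_{T,f,\eta}$ is the pushforward of this Haar measure under $w_T|_A$. Equivalently,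 $\int h\,d\mu_{T,f,\eta}=\lim_{Y\to\infty}\frac1Y\int_{\eta_0}^Yh(E^{(T)}[f,g_{y,\eta}])dy$ for continuous $h$, where $E^{(T)}[f,g_{y,\eta}]=2\sum_{j}m_\Gamma(\pi_{is_j,p_j})\mathrm{Re}(\hat f(-p_j)e^{is_jy}c_{s_j,\eta})+b_{f,\eta}$. *)

theory Defs
  imports "HOL-Analysis.Analysis" "HOL-Probability.Probability"
begin

definition fhat :: "(real \<Rightarrow> real) \<Rightarrow> int \<Rightarrow> complex" where
  "fhat f p = integral {0..2*pi} (\<lambda>\<theta>. complex_of_real (f \<theta>) * exp (- \<i> * of_int p * of_real \<theta>))
              / complex_of_real (2*pi)"

definition psi_eta :: "(real \<Rightarrow> real) \<Rightarrow> real \<Rightarrow> real \<Rightarrow> real" where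
  "psi_eta psi eta t = psi (t / eta) / eta"

definition c_se :: "(real \<Rightarrow> real) \<Rightarrow> real \<Rightarrow> real \<Rightarrow> complex" where
  "c_se psi s eta = integral UNIV (\<lambda>t. complex_of_real (psi_eta psi eta t)
        * exp (complex_of_real t * (1 + \<i> * complex_of_real s)) / (1 + \<i> * complex_of_real s))"

text \<open>Multiplicities are given by m s p = m_Gamma(pi_{is,p}).
  b_{f,eta} = (sum_{p<>0} m(0,p) Re fhat(p) - 2 Re fhat(1)) * 2 c_{0,eta}
  (c_{0,eta} is real; we take its real part).\<close>
definition b_fe :: "(real \<Rightarrow> int \<Rightarrow> nat) \<Rightarrow> (real \<Rightarrow> real) \<Rightarrow> (real \<Rightarrow> real) \<Rightarrow> real \<Rightarrow> real" where
  "b_fe m psi f eta =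
     ((\<Sum>\<^sub>\<infinity>p\<in>{p::int. p \<noteq> 0}. real (m 0 p) * Re (fhat f p)) - 2 * Re (fhat f 1))
     * 2 * Re (c_se psi 0 eta)"

definition pairs_T :: "(real \<Rightarrow> int \<Rightarrow> nat) \<Rightarrow> real \<Rightarrow> (real \<times> int) set" where
  "pairs_T m T = {(s,p). s \<noteq> 0 \<and> \<bar>s\<bar> < T \<and> \<bar>real_of_int p\<bar> < T \<and> m s p \<noteq> 0}"

definition E_T :: "(real \<Rightarrow> int \<Rightarrow> nat) \<Rightarrow> (real \<Rightarrow> real) \<Rightarrow> (real \<Rightarrow> real) \<Rightarrow> real \<Rightarrow> real \<Rightarrow> real \<Rightarrow> real" where
  "E_T m psi f T eta y =
     2 * (\<Sum>(s,p)\<in>pairs_T m T. real (m s p) *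
            Re (fhat f (- p) * exp (\<i> * complex_of_real (s * y)) * c_se psi s eta))
     + b_fe m psi f eta"

definition rad_T :: "(real \<Rightarrow> int \<Rightarrow> nat) \<Rightarrow> (real \<Rightarrow> real) \<Rightarrow> (real \<Rightarrow> real) \<Rightarrow> real \<Rightarrow> real \<Rightarrow> real" where
  "rad_T m psi f T eta =
     2 * (\<Sum>(s,p)\<in>{(s,p). \<bar>s\<bar> < T \<and> \<bar>real_of_int p\<bar> < T \<and> m s p \<noteq> 0}.
            real (m s p) * cmod (fhat f (- p)) * cmod (c_se psi s eta))"

definition rad_all :: "(real \<Rightarrow> int \<Rightarrow> nat) \<Rightarrow> (real \<Rightarrow> real) \<Rightarrow> (real \<Rightarrow> real) \<Rightarrow> real \<Rightarrow> ennreal" where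
  "rad_all m psi f eta =
     2 * (\<Sum>\<^sub>\<infinity>(s,p)\<in>{(s,p). m s p \<noteq> 0}.
            ennreal (real (m s p) * cmod (fhat f (- p)) * cmod (c_se psi s eta)))"

end

(* E_T is b_fe plus finitely many oscillations Re (a e^{i s y}) with s <> 0. Each of them has the
   bounded antiderivative Im (a e^{i s y}) / s, so its Cesaro mean tends to 0; testing the limit
   distribution against a clamped identity therefore gives mean b_fe. The pointwise bound
   |Re (a e^{i s y})| <= |a| confines E_T, hence the support of mu, to the interval of radius
   rad_T, and rad_T is a partial sum of rad_all. *)

theory Submission
  imports Defs "HOL-Real_Asymp.Real_Asymp"
begin

lemma has_integral_Re_exp:
  fixes A :: complex and \<omega> a b :: real
  assumes "\<omega> \<noteq> 0" "a \<le> b"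
  shows "((\<lambda>y. Re (A * exp (\<i> * of_real (\<omega> * y)))) has_integral
           (Im (A * exp (\<i> * of_real (\<omega> * b))) - Im (A * exp (\<i> * of_real (\<omega> * a)))) / \<omega>) {a..b}"
proof -
  have "((\<lambda>y. Im (A * exp (\<i> * of_real (\<omega> * y))) / \<omega>) has_real_derivative
          Re (A * exp (\<i> * of_real (\<omega> * y)))) (at y within {a..b})" for y
    by (simp add: Re_exp Im_exp) (rule derivative_eq_intros refl | simp add: assms field_simps)+
  then have "((\<lambda>y. Re (A * exp (\<i> * of_real (\<omega> * y)))) has_integral
      Im (A * exp (\<i> * of_real (\<omega> * b))) / \<omega> - Im (A * exp (\<i> * of_real (\<omega> * a))) / \<omega>) {a..b}"
    by (intro fundamental_theorem_of_calculus[OF assms(2)])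
       (auto simp: has_real_derivative_iff_has_vector_derivative)
  then show ?thesis
    by (simp add: diff_divide_distrib)
qed

lemma average_integral_Re_exp_tendsto_0:
  fixes A :: complex and \<omega> y\<^sub>0 :: real
  assumes "\<omega> \<noteq> 0"
  shows "((\<lambda>Y. (1 / Y) * integral {y\<^sub>0..Y} (\<lambda>y. Re (A * exp (\<i> * of_real (\<omega> * y)))))
           \<longlongrightarrow> 0) at_top"
proof (rule Lim_null_comparison)
  show "((\<lambda>Y. 2 * cmod A / \<bar>\<omega>\<bar> / Y) \<longlongrightarrow> 0) at_top"
    by real_asymp
  have bound: "\<bar>integral {y\<^sub>0..Y} (\<lambda>y. Re (A * exp (\<i> * of_real (\<omega> * y))))\<bar>
      \<le> 2 * cmod A / \<bar>\<omega>\<bar>"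
    if "y\<^sub>0 \<le> Y" for Y
  proof -
    have "\<bar>Im (A * exp (\<i> * of_real (\<omega> * t)))\<bar> \<le> cmod A" for t
      using abs_Im_le_cmod[of "A * exp (\<i> * of_real (\<omega> * t))"] by (simp add: norm_mult)
    from this[of Y] this[of y\<^sub>0] show ?thesis
      using integral_unique[OF has_integral_Re_exp[OF assms that, of A]]
      by (simp add: divide_right_mono)
  qed
  have norm_scaled_le: "norm ((1 / Y) * x) \<le> C / Y" if "\<bar>x\<bar> \<le> C" "0 < Y" for x C Y :: real
    using that by (simp add: abs_mult divide_right_mono)
  show "\<forall>\<^sub>F Y in at_top. norm ((1 / Y) * integral {y\<^sub>0..Y} (\<lambda>y. Re (A * exp (\<i> * of_real (\<omega> * y)))))
      \<le> 2 * cmod A / \<bar>\<omega>\<bar> / Y"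
    using eventually_ge_at_top[of y\<^sub>0] eventually_gt_at_top[of 0]
    by eventually_elim (intro norm_scaled_le bound)
qed

lemma average_integral_trig_sum_tendsto:
  fixes A :: "'a \<Rightarrow> complex" and \<omega> :: "'a \<Rightarrow> real" and b y\<^sub>0 :: real
  assumes "finite S" and "\<And>q. q \<in> S \<Longrightarrow> \<omega> q \<noteq> 0"
  shows "((\<lambda>Y. (1 / Y) * integral {y\<^sub>0..Y}
            (\<lambda>y. b + (\<Sum>q\<in>S. Re (A q * exp (\<i> * of_real (\<omega> q * y)))))) \<longlongrightarrow> b) at_top"
proof -
  define wave where "wave q y = Re (A q * exp (\<i> * of_real (\<omega> q * y)))" for q y
  have average_eq: "(1 / Y) * integral {y\<^sub>0..Y} (\<lambda>y. b + (\<Sum>q\<in>S. wave q y))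
      = b * (Y - y\<^sub>0) / Y + (\<Sum>q\<in>S. (1 / Y) * integral {y\<^sub>0..Y} (wave q))" if "y\<^sub>0 \<le> Y" for Y
  proof -
    have "wave q integrable_on {y\<^sub>0..Y}" if "q \<in> S" for q
      using has_integral_Re_exp[OF assms(2)[OF that] \<open>y\<^sub>0 \<le> Y\<close>] unfolding wave_def by blast
    then have "((\<lambda>y. b + (\<Sum>q\<in>S. wave q y)) has_integral
        b * (Y - y\<^sub>0) + (\<Sum>q\<in>S. integral {y\<^sub>0..Y} (wave q))) {y\<^sub>0..Y}"
      using has_integral_const_real[of b y\<^sub>0 Y] that
      by (intro has_integral_add has_integral_sum[OF assms(1)]) (auto simp: mult.commute)
    then have "integral {y\<^sub>0..Y} (\<lambda>y. b + (\<Sum>q\<in>S. wave q y))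
        = b * (Y - y\<^sub>0) + (\<Sum>q\<in>S. integral {y\<^sub>0..Y} (wave q))"
      by (rule integral_unique)
    then show ?thesis
      by (simp add: sum_divide_distrib add_divide_distrib)
  qed
  have "\<forall>\<^sub>F Y in at_top. b * (Y - y\<^sub>0) / Y + (\<Sum>q\<in>S. (1 / Y) * integral {y\<^sub>0..Y} (wave q))
      = (1 / Y) * integral {y\<^sub>0..Y} (\<lambda>y. b + (\<Sum>q\<in>S. wave q y))"
    using eventually_ge_at_top[of y\<^sub>0] by eventually_elim (rule average_eq[symmetric])
  moreover have "((\<lambda>Y. b * (Y - y\<^sub>0) / Y + (\<Sum>q\<in>S. (1 / Y) * integral {y\<^sub>0..Y} (wave q)))
      \<longlongrightarrow> b + 0) at_top"
    unfolding wave_def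
    by (intro tendsto_add tendsto_null_sum average_integral_Re_exp_tendsto_0 assms(2)) real_asymp
  ultimately show ?thesis
    unfolding wave_def by (simp add: tendsto_cong)
qed

lemma abs_sum_Re_exp_le:
  fixes A :: "'a \<Rightarrow> complex" and \<theta> :: "'a \<Rightarrow> real"
  shows "\<bar>\<Sum>q\<in>S. Re (A q * exp (\<i> * of_real (\<theta> q)))\<bar> \<le> (\<Sum>q\<in>S. cmod (A q))"
proof -
  have "\<bar>Re (A q * exp (\<i> * of_real (\<theta> q)))\<bar> \<le> cmod (A q)" for q
    using abs_Re_le_cmod[of "A q * exp (\<i> * of_real (\<theta> q))"] by (simp add: norm_mult)
  then show ?thesis
    by (rule order_trans[OF sum_abs sum_mono])
qed

definition limit_distribution :: "real measure \<Rightarrow> real \<Rightarrow> (real \<Rightarrow> real) \<Rightarrow> bool" where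
  "limit_distribution \<mu> y\<^sub>0 E \<longleftrightarrow> prob_space \<mu> \<and> sets \<mu> = sets borel \<and>
     (\<forall>h. continuous_on UNIV h \<longrightarrow>
        ((\<lambda>Y. (1 / Y) * integral {y\<^sub>0..Y} (\<lambda>y. h (E y))) \<longlongrightarrow> integral\<^sup>L \<mu> h) at_top)"

lemma limit_distribution_integral_eq:
  assumes "limit_distribution \<mu> y\<^sub>0 E" "continuous_on UNIV h"
    and "((\<lambda>Y. (1 / Y) * integral {y\<^sub>0..Y} (\<lambda>y. h (E y))) \<longlongrightarrow> c) at_top"
  shows "integral\<^sup>L \<mu> h = c"
  using assms tendsto_unique[OF trivial_limit_at_top_linorder]
  unfolding limit_distribution_def by blast

lemma limit_distribution_integrable_bounded:
  fixes h :: "real \<Rightarrow> real"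
  assumes "limit_distribution \<mu> y\<^sub>0 E" "continuous_on UNIV h" "\<And>x. \<bar>h x\<bar> \<le> B"
  shows "integrable \<mu> h"
proof -
  interpret prob_space \<mu>
    using assms(1) unfolding limit_distribution_def by blast
  have "h \<in> borel_measurable \<mu>"
    using assms(1) borel_measurable_continuous_onI[OF assms(2)] measurable_cong_sets
    unfolding limit_distribution_def by blast
  then show ?thesis
    using assms(3) by (intro integrable_const_bound[where B = B]) auto
qed

lemma limit_distribution_AE_Icc:
  assumes lim: "limit_distribution \<mu> y\<^sub>0 E" and range: "\<And>y. E y \<in> {lo..hi}"
  shows "AE x in \<mu>. x \<in> {lo..hi}"
proof -
  define d where "d x = min 1 (max 0 (x - hi) + max 0 (lo - x))" for x
  have d_cont: "continuous_on UNIV d"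
    unfolding d_def by (intro continuous_intros)
  have "d (E y) = 0" for y
    using range[of y] unfolding d_def by auto
  then have "integral\<^sup>L \<mu> d = 0"
    by (intro limit_distribution_integral_eq[OF lim d_cont]) simp
  moreover have "integrable \<mu> d"
    by (rule limit_distribution_integrable_bounded[OF lim d_cont, where B = 1]) (simp add: d_def)
  ultimately have "AE x in \<mu>. d x = 0"
    by (subst (asm) integral_nonneg_eq_0_iff_AE) (auto simp: d_def)
  then show ?thesis
    by (rule AE_mp) (auto simp: d_def)
qed

lemma limit_distribution_mean:
  assumes lim: "limit_distribution \<mu> y\<^sub>0 E" and range: "\<And>y. E y \<in> {lo..hi}"
    and avg: "((\<lambda>Y. (1 / Y) * integral {y\<^sub>0..Y} E) \<longlongrightarrow> c) at_top"
  shows "integrable \<mu> (\<lambda>x. x)" "integral\<^sup>L \<mu> (\<lambda>x. x) = c"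
proof -
  \<comment> \<open>The identity is no bounded test function, but its clamp to \<open>[lo, hi]\<close> is one
    and agrees with it a.e.\<close>
  define clamp where "clamp x = max lo (min hi x)" for x
  have clamp_cont: "continuous_on UNIV clamp"
    unfolding clamp_def by (intro continuous_intros)
  have clamp_AE: "AE x in \<mu>. clamp x = x"
    using limit_distribution_AE_Icc[OF lim range] by (rule AE_mp) (auto simp: clamp_def)
  have clamp_int: "integrable \<mu> clamp"
    by (rule limit_distribution_integrable_bounded[OF lim clamp_cont, where B = "\<bar>lo\<bar> + \<bar>hi\<bar>"])
       (auto simp: clamp_def)
  have id_meas: "(\<lambda>x. x) \<in> borel_measurable \<mu>"
    using lim unfolding limit_distribution_def by (auto intro: measurable_ident_sets)
  show "integrable \<mu> (\<lambda>x. x)"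
    using clamp_int id_meas clamp_AE by (rule integrable_cong_AE_imp)
  have "clamp (E y) = E y" for y
    using range[of y] by (auto simp: clamp_def)
  then have "integral\<^sup>L \<mu> clamp = c"
    using limit_distribution_integral_eq[OF lim clamp_cont] avg by simp
  then show "integral\<^sup>L \<mu> (\<lambda>x. x) = c"
    using integral_cong_AE[OF borel_measurable_integrable[OF clamp_int] id_meas clamp_AE] by simp
qed

lemma ereal_mem_Icc_widen:
  assumes "x \<in> {b - r..b + r}" "ennreal r \<le> R"
  shows "ereal b - enn2ereal R \<le> ereal x \<and> ereal x \<le> ereal b + enn2ereal R"
proof -
  have "0 \<le> r"
    using assms(1) by auto
  then have "ereal r \<le> enn2ereal R"
    using assms(2) by (metis enn2ereal_ennreal less_eq_ennreal.rep_eq)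
  then show ?thesis
    using assms(1) by (cases "enn2ereal R") auto
qed

definition E_T_coeff ::
    "(real \<Rightarrow> int \<Rightarrow> nat) \<Rightarrow> (real \<Rightarrow> real) \<Rightarrow> (real \<Rightarrow> real) \<Rightarrow> real \<Rightarrow> real \<times> int \<Rightarrow> complex"
  where
  "E_T_coeff m psi f eta q = of_nat (2 * m (fst q) (snd q)) * fhat f (- snd q) * c_se psi (fst q) eta"

lemma E_T_eq_trig_sum:
  "E_T m psi f T eta y = b_fe m psi f eta +
     (\<Sum>q\<in>pairs_T m T. Re (E_T_coeff m psi f eta q * exp (\<i> * of_real (fst q * y))))"
  unfolding E_T_def sum_distrib_left
  by (subst add.commute, intro arg_cong[where f = "(+) _"] sum.cong refl)
     (auto simp: E_T_coeff_def algebra_simps)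

lemma rad_T_eq_sum_cmod:
  "rad_T m psi f T eta =
     (\<Sum>q\<in>{(s,p). \<bar>s\<bar> < T \<and> \<bar>real_of_int p\<bar> < T \<and> m s p \<noteq> 0}. cmod (E_T_coeff m psi f eta q))"
  unfolding rad_T_def E_T_coeff_def by (simp add: split_def sum_distrib_left norm_mult mult_ac)

lemma E_T_mem_Icc:
  assumes "finite {(s,p). \<bar>s\<bar> < T \<and> \<bar>real_of_int p\<bar> < T \<and> m s p \<noteq> 0}"
  shows "E_T m psi f T eta y \<in> {b_fe m psi f eta - rad_T m psi f T eta .. b_fe m psi f eta + rad_T m psi f T eta}"
proof -
  have "\<bar>E_T m psi f T eta y - b_fe m psi f eta\<bar> \<le> (\<Sum>q\<in>pairs_T m T. cmod (E_T_coeff m psi f eta q))"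
    unfolding E_T_eq_trig_sum add_diff_cancel_left' by (rule abs_sum_Re_exp_le)
  also have "\<dots> \<le> rad_T m psi f T eta"
    unfolding rad_T_eq_sum_cmod using assms by (intro sum_mono2) (auto simp: pairs_T_def)
  finally show ?thesis
    by auto
qed

lemma rad_T_le_rad_all:
  assumes "finite {(s,p). \<bar>s\<bar> < T \<and> \<bar>real_of_int p\<bar> < T \<and> m s p \<noteq> 0}"
  shows "ennreal (rad_T m psi f T eta) \<le> rad_all m psi f eta"
proof -
  define Q where "Q = {(s,p). \<bar>s\<bar> < T \<and> \<bar>real_of_int p\<bar> < T \<and> m s p \<noteq> 0}"
  define w where "w q = real (m (fst q) (snd q)) * cmod (fhat f (- snd q)) * cmod (c_se psi (fst q) eta)"
    for q
  have "rad_T m psi f T eta = 2 * (\<Sum>q\<in>Q. w q)"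
    unfolding rad_T_def Q_def w_def by (simp add: split_def)
  moreover have "w q \<ge> 0" for q
    unfolding w_def by simp
  ultimately have "ennreal (rad_T m psi f T eta) = 2 * (\<Sum>q\<in>Q. ennreal (w q))"
    by (simp add: ennreal_mult' sum_ennreal sum_nonneg)
  also have "\<dots> = 2 * (\<Sum>\<^sub>\<infinity>q\<in>Q. ennreal (w q))"
    using assms unfolding Q_def by simp
  also have "\<dots> \<le> 2 * (\<Sum>\<^sub>\<infinity>q\<in>{(s,p). m s p \<noteq> 0}. ennreal (w q))"
    by (intro mult_left_mono infsum_mono_neutral nonneg_summable_on_complete) (auto simp: Q_def)
  also have "\<dots> = rad_all m psi f eta"
    unfolding rad_all_def w_def by (simp add: split_def)
  finally show ?thesis .
qed

theorem corollary4p2: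
  fixes m :: "real \<Rightarrow> int \<Rightarrow> nat"
    and f psi :: "real \<Rightarrow> real"
    and T eta eta0 :: real
    and \<mu> :: "real measure"
  assumes m_locfin: "\<And>R. finite {(s,p). \<bar>s\<bar> < R \<and> \<bar>real_of_int p\<bar> < R \<and> m s p \<noteq> 0}"
    and psi_smooth: "\<And>k. (deriv ^^ k) psi differentiable_on UNIV"
    and psi_even: "\<And>t. psi (- t) = psi t"
    and psi_nonneg: "\<And>t. psi t \<ge> 0"
    and psi_supp: "\<And>t. \<bar>t\<bar> > 1 \<Longrightarrow> psi t = 0"
    and psi_int: "(psi has_integral 1) UNIV"
    and f_periodic: "\<And>x. f (x + 2 * pi) = f x"
    and f_smooth: "\<And>k. (deriv ^^ k) f differentiable_on UNIV"
    and f_mean0: "fhat f 0 = 0"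
    and T_pos: "T > 0"
    and eta0_pos: "eta0 > 0"
    and eta_pos: "0 < eta" and eta_le: "eta \<le> eta0"
    and mu_prob: "prob_space \<mu>"
    and mu_borel: "sets \<mu> = sets borel"
    and mu_def: "\<And>h. continuous_on UNIV h \<Longrightarrow>
        ((\<lambda>Y. (1 / Y) * integral {eta0..Y} (\<lambda>y. h (E_T m psi f T eta y)))
           \<longlongrightarrow> integral\<^sup>L \<mu> h) at_top"
  shows "(integrable \<mu> (\<lambda>x. x) \<and> integral\<^sup>L \<mu> (\<lambda>x. x) = b_fe m psi f eta)
       \<and> (AE x in \<mu>. x \<in> {b_fe m psi f eta - rad_T m psi f T eta .. b_fe m psi f eta + rad_T m psi f T eta})
       \<and> (\<forall>x \<in> {b_fe m psi f eta - rad_T m psi f T eta .. b_fe m psi f eta + rad_T m psi f T eta}.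
           ereal (b_fe m psi f eta) - enn2ereal (rad_all m psi f eta) \<le> ereal x
         \<and> ereal x \<le> ereal (b_fe m psi f eta) + enn2ereal (rad_all m psi f eta))"
proof -
  let ?b = "b_fe m psi f eta" and ?r = "rad_T m psi f T eta" and ?E = "E_T m psi f T eta"
  have range: "?E y \<in> {?b - ?r .. ?b + ?r}" for y
    using E_T_mem_Icc[OF m_locfin] .
  have lim: "limit_distribution \<mu> eta0 ?E"
    unfolding limit_distribution_def using mu_prob mu_borel mu_def by blast
  have "finite (pairs_T m T)"
    using m_locfin[of T] by (rule rev_finite_subset) (auto simp: pairs_T_def)
  then have avg: "((\<lambda>Y. (1 / Y) * integral {eta0..Y} ?E) \<longlongrightarrow> ?b) at_top"
    unfolding E_T_eq_trig_sum
    by (rule average_integral_trig_sum_tendsto) (auto simp: pairs_T_def)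
  show ?thesis
    using limit_distribution_mean[OF lim range avg] limit_distribution_AE_Icc[OF lim range]
      ereal_mem_Icc_widen[OF _ rad_T_le_rad_all[OF m_locfin]]
    by blast
qed

end
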